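(* Let $(\lambda_k),(x_k),(y_k)$ be generated by the acceleration framework (context) up to $K$ for convex differentiable $g$ with minimizer $x^*$, and suppose $\delta\le\frac{\|x^*\|}{\mu A_K}$ with $\mu=\frac{4\sqrt2}{\sqrt{1-\sigma}}$. Then for all $k\in[K]$ and $\theta\in[0,1]$: $\|y_k-x^*\|\le\mu\|x^*\|$ and $\|(1-\theta)x_k+\theta y_k-x^*\|\le\mu\|x^*\|$.
   Context: Acceleration framework: let $g:\mathbb{R}^d\to\mathbb{R}$ be convex and differentiable, $\sigma\in(0,1)$, $\delta\ge0$, $K\ge1$. Sequences $(\lambda_k)_{k=1}^K\subset(0,\infty)$ and $(x_k)_{k=0}^K,(y_k)_{k=0}^K\subset\mathbb{R}^d$ are generated by the framework if $x_0=y_0=0$, $A_0=0$, and for each $k=0,\dots,K-1$, with $a_{k+1}=\frac12\big[\lambda_{k+1}+\sqrt{\lambda_{k+1}^2+4\lambda_{k+1}A_k}\big]$, $A_{k+1}=A_k+a_{k+1}$, $\tilde x_k=\frac{A_k}{A_{k+1}}y_k+\frac{a_{k+1}}{A_{k+1}}x_k$, one has $\|\lambda_{k+1}\nabla g(y_{k+1})+y_{k+1}-\tilde x_k\|\le\sigma\|y_{k+1}-\tilde x_k\|+\lambda_{k+1}\delta$ and $\|x_{k+1}-(x_k-a_{k+1}\nabla g(y_{k+1}))\|\le a_{k+1}\delta$. (Note $\lambda_{k+1}A_{k+1}=a_{k+1}^2$.) *)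

theory Defs
  imports "HOL-Analysis.Analysis"
begin

text \<open>Coefficients of the acceleration framework: A 0 = 0,
  a (k+1) = (lam(k+1) + sqrt(lam(k+1)^2 + 4 lam(k+1) A k)) / 2,  A (k+1) = A k + a (k+1).
  The value accel_a lam 0 is irrelevant (set to 0).\<close>

fun accel_A :: "(nat \<Rightarrow> real) \<Rightarrow> nat \<Rightarrow> real" where
  "accel_A lam 0 = 0"
| "accel_A lam (Suc k) = accel_A lam k
     + (lam (Suc k) + sqrt ((lam (Suc k))\<^sup>2 + 4 * lam (Suc k) * accel_A lam k)) / 2"

definition accel_a :: "(nat \<Rightarrow> real) \<Rightarrow> nat \<Rightarrow> real" where
  "accel_a lam k = (case k of 0 \<Rightarrow> 0
     | Suc j \<Rightarrow> (lam (Suc j) + sqrt ((lam (Suc j))\<^sup>2 + 4 * lam (Suc j) * accel_A lam j)) / 2)"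

definition accel_xtilde :: "(nat \<Rightarrow> real) \<Rightarrow> (nat \<Rightarrow> 'a::real_vector) \<Rightarrow> (nat \<Rightarrow> 'a) \<Rightarrow> nat \<Rightarrow> 'a" where
  "accel_xtilde lam x y k =
     (accel_A lam k / accel_A lam (Suc k)) *\<^sub>R y k + (accel_a lam (Suc k) / accel_A lam (Suc k)) *\<^sub>R x k"

definition accel_framework ::
  "('a::real_inner \<Rightarrow> 'a) \<Rightarrow> real \<Rightarrow> real \<Rightarrow> nat \<Rightarrow> (nat \<Rightarrow> real) \<Rightarrow> (nat \<Rightarrow> 'a) \<Rightarrow> (nat \<Rightarrow> 'a) \<Rightarrow> bool"
  where
  "accel_framework G \<sigma> \<delta> K lam x y \<longleftrightarrow>
     0 < \<sigma> \<and> \<sigma> < 1 \<and> 0 \<le> \<delta> \<and> 1 \<le> K \<and>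
     (\<forall>k\<in>{1..K}. 0 < lam k) \<and> x 0 = 0 \<and> y 0 = 0 \<and>
     (\<forall>k<K.
        norm (lam (Suc k) *\<^sub>R G (y (Suc k)) + y (Suc k) - accel_xtilde lam x y k)
          \<le> \<sigma> * norm (y (Suc k) - accel_xtilde lam x y k) + lam (Suc k) * \<delta>
      \<and> norm (x (Suc k) - (x k - accel_a lam (Suc k) *\<^sub>R G (y (Suc k))))
          \<le> accel_a lam (Suc k) * \<delta>)"

end

theory Submission
  imports Defs
begin

text \<open>
  A Lyapunov argument. For the potential \<open>\<parallel>x\<^sub>k - x\<^sup>*\<parallel>\<^sup>2 + 2 A\<^sub>k (g y\<^sub>k - g x\<^sup>*)\<close>, the gradient
  inequalities at \<open>y\<^sub>k\<^sub>+\<^sub>1\<close> towards \<open>x\<^sup>*\<close> and towards \<open>y\<^sub>k\<close>, weighted by \<open>a\<^sub>k\<^sub>+\<^sub>1\<close> and \<open>A\<^sub>k\<close>,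
  together with \<open>a\<^sub>k\<^sub>+\<^sub>1\<^sup>2 = \<lambda>\<^sub>k\<^sub>+\<^sub>1 A\<^sub>k\<^sub>+\<^sub>1\<close>, show that an exact step does not increase the potential and
  even gains \<open>(1 - \<sigma>) (A\<^sub>k\<^sub>+\<^sub>1 / \<lambda>\<^sub>k\<^sub>+\<^sub>1) \<parallel>y\<^sub>k\<^sub>+\<^sub>1 - x\<^sub>k'\<parallel>\<^sup>2\<close>, where \<open>x\<^sub>k'\<close> is the extrapolated point;
  the errors \<open>\<sigma>\<close> and \<open>\<delta>\<close> raise its square root by at most \<open>2 a\<^sub>k\<^sub>+\<^sub>1 \<delta> / \<surd>(1 - \<sigma>)\<close>.
  So the square root of the potential stays below \<open>R = \<parallel>x\<^sup>*\<parallel> + 2 A\<^sub>K \<delta> / \<surd>(1 - \<sigma>)\<close>, which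
  bounds \<open>\<parallel>x\<^sub>k - x\<^sup>*\<parallel>\<close> and the residuals \<open>\<parallel>y\<^sub>k\<^sub>+\<^sub>1 - x\<^sub>k'\<parallel>\<close>. As \<open>y\<^sub>k\<^sub>+\<^sub>1\<close> is the convex combination
  \<open>x\<^sub>k'\<close> of \<open>y\<^sub>k\<close> and \<open>x\<^sub>k\<close> up to the residual, induction gives \<open>\<parallel>y\<^sub>k - x\<^sup>*\<parallel> \<le> 2 R / \<surd>(1 - \<sigma>)\<close>,
  and the hypothesis on \<open>\<delta>\<close> makes \<open>R \<le> 2 \<parallel>x\<^sup>*\<parallel>\<close>.
\<close>

lemma convex_on_UNIV_gradient_inequality:
  fixes g :: "'a::real_inner \<Rightarrow> real"
  assumes conv: "convex_on UNIV g"
    and grad: "\<And>z. (g has_derivative (\<lambda>h. G z \<bullet> h)) (at z)"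
  shows "g c + G c \<bullet> (x - c) \<le> g x"
proof -
  define \<phi> where "\<phi> t = g (c + t *\<^sub>R (x - c))" for t :: real
  have "convex_on UNIV \<phi>"
    unfolding \<phi>_def
  proof (rule convex_onI)
    fix u s t :: real assume "0 < u" "u < 1"
    have "c + ((1 - u) *\<^sub>R s + u *\<^sub>R t) *\<^sub>R (x - c)
        = (1 - u) *\<^sub>R (c + s *\<^sub>R (x - c)) + u *\<^sub>R (c + t *\<^sub>R (x - c))"
      by (simp add: algebra_simps)
    then show "g (c + ((1 - u) *\<^sub>R s + u *\<^sub>R t) *\<^sub>R (x - c))
        \<le> (1 - u) * g (c + s *\<^sub>R (x - c)) + u * g (c + t *\<^sub>R (x - c))"
      using conv \<open>0 < u\<close> \<open>u < 1\<close> by (simp add: convex_on_def)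
  qed simp
  moreover have "(\<phi> has_field_derivative (G c \<bullet> (x - c))) (at 0)"
  proof -
    have affine: "((\<lambda>t::real. c + t *\<^sub>R (x - c)) has_derivative (\<lambda>t. t *\<^sub>R (x - c))) (at 0)"
      by (auto intro!: derivative_eq_intros)
    have "(\<phi> has_derivative (\<lambda>t. G c \<bullet> (t *\<^sub>R (x - c)))) (at 0)"
      unfolding \<phi>_def using has_derivative_compose[OF affine, of g "\<lambda>h. G c \<bullet> h"] grad[of c]
      by simp
    then show ?thesis
      unfolding has_field_derivative_def by (simp add: mult.commute[of _ "G c \<bullet> (x - c)"])
  qed
  ultimately have "G c \<bullet> (x - c) * (1 - 0) \<le> \<phi> 1 - \<phi> 0"
    by (intro convex_on_imp_above_tangent) auto
  then show ?thesis
    unfolding \<phi>_def by simp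
qed

text \<open>Convexity of the square, applied to \<open>\<sigma> r + (1 - \<sigma>) (e / (1 - \<sigma>))\<close>.\<close>

lemma square_le_convex_split:
  fixes w r e \<sigma> :: real
  assumes "0 < \<sigma>" "\<sigma> < 1" "0 \<le> w" "w \<le> \<sigma> * r + e"
  shows "w\<^sup>2 \<le> \<sigma> * r\<^sup>2 + e\<^sup>2 / (1 - \<sigma>)"
proof -
  have "w\<^sup>2 \<le> (\<sigma> * r + e)\<^sup>2"
    using assms by (intro power_mono) auto
  moreover have "\<sigma> * r\<^sup>2 + e\<^sup>2 / (1 - \<sigma>) - (\<sigma> * r + e)\<^sup>2 = \<sigma> / (1 - \<sigma>) * ((1 - \<sigma>) * r - e)\<^sup>2"
    using assms by (simp add: field_simps power2_eq_square)
  moreover have "0 \<le> \<sigma> / (1 - \<sigma>) * ((1 - \<sigma>) * r - e)\<^sup>2"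
    using assms by simp
  ultimately show ?thesis
    by linarith
qed

lemma square_add_le_square_add:
  fixes p q Q V e t :: real
  assumes "0 \<le> p" "0 \<le> Q" "0 \<le> V" "0 \<le> e" "0 \<le> t"
    and bound: "q\<^sup>2 + Q \<le> V\<^sup>2 + e\<^sup>2" and near: "p \<le> q + t"
  shows "p\<^sup>2 + Q \<le> (V + e + t)\<^sup>2"
proof -
  have "0 \<le> V * e"
    using assms by simp
  have q: "\<bar>q\<bar> \<le> V + e"
  proof (rule power2_le_imp_le)
    show "\<bar>q\<bar>\<^sup>2 \<le> (V + e)\<^sup>2"
      unfolding power2_abs power2_sum using bound \<open>0 \<le> Q\<close> \<open>0 \<le> V * e\<close> by linarith
  qed (use assms in simp)
  have "p \<le> \<bar>q\<bar> + t"
    using near abs_ge_self[of q] by linarith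
  then have "p\<^sup>2 \<le> (\<bar>q\<bar> + t)\<^sup>2"
    using \<open>0 \<le> p\<close> by (rule power_mono)
  then show ?thesis
    unfolding power2_sum power2_abs
    using bound mult_right_mono[OF q \<open>0 \<le> t\<close>] \<open>0 \<le> V * e\<close> by linarith
qed

lemma accel_exact_step:
  fixes x y u y' v xt :: "'a::real_inner" and A a lam gy gy' gs :: real
  assumes "0 < lam" "0 \<le> A" "0 \<le> a"
    and a_sq: "a\<^sup>2 = lam * (A + a)"
    and xt: "(A + a) *\<^sub>R xt = A *\<^sub>R y + a *\<^sub>R x"
    and grad_u: "gy' + v \<bullet> (u - y') \<le> gs"
    and grad_y: "gy' + v \<bullet> (y - y') \<le> gy"
  shows "(norm (x - a *\<^sub>R v - u))\<^sup>2 + 2 * (A + a) * (gy' - gs)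
    \<le> (norm (x - u))\<^sup>2 + 2 * A * (gy - gs)
       + (A + a) / lam * ((norm (lam *\<^sub>R v + (y' - xt)))\<^sup>2 - (norm (y' - xt))\<^sup>2)"
proof -
  have descent: "(norm (x - a *\<^sub>R v - u))\<^sup>2
      = (norm (x - u))\<^sup>2 - 2 * a * (v \<bullet> (x - u)) + a\<^sup>2 * (norm v)\<^sup>2"
    unfolding power2_norm_eq_inner
    by (simp add: inner_diff_left inner_diff_right inner_commute algebra_simps power2_eq_square)
  have "(norm (lam *\<^sub>R v + (y' - xt)))\<^sup>2 - (norm (y' - xt))\<^sup>2
      = lam\<^sup>2 * (norm v)\<^sup>2 + 2 * lam * (v \<bullet> (y' - xt))"
    unfolding power2_norm_eq_inner
    by (simp add: inner_add_left inner_add_right inner_commute algebra_simps power2_eq_square)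
  then have residual: "(A + a) / lam * ((norm (lam *\<^sub>R v + (y' - xt)))\<^sup>2 - (norm (y' - xt))\<^sup>2)
      = lam * (A + a) * (norm v)\<^sup>2 + 2 * (A + a) * (v \<bullet> (y' - xt))"
    using \<open>0 < lam\<close> by (simp add: field_simps power2_eq_square)
  have "A * (v \<bullet> (y - y')) + a * (v \<bullet> (u - y'))
      = v \<bullet> (A *\<^sub>R y + a *\<^sub>R x) - (A + a) * (v \<bullet> y') - a * (v \<bullet> (x - u))"
    by (simp add: inner_diff_right inner_add_right algebra_simps)
  also have "\<dots> = - (A + a) * (v \<bullet> (y' - xt)) - a * (v \<bullet> (x - u))"
    by (simp flip: xt add: inner_diff_right algebra_simps)
  finally have "A * (gy - gy') + a * (gs - gy') \<ge> - (A + a) * (v \<bullet> (y' - xt)) - a * (v \<bullet> (x - u))"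
    using mult_left_mono[OF grad_y \<open>0 \<le> A\<close>] mult_left_mono[OF grad_u \<open>0 \<le> a\<close>]
    by (simp add: algebra_simps)
  then show ?thesis
    unfolding descent residual a_sq by (simp add: algebra_simps)
qed

lemma le_divide_sqrt_one_minus:
  fixes \<sigma> t :: real
  assumes "0 \<le> \<sigma>" "\<sigma> < 1" "0 \<le> t"
  shows "t \<le> t / sqrt (1 - \<sigma>)"
proof -
  have "t * sqrt (1 - \<sigma>) \<le> t"
    using assms by (intro mult_left_le) auto
  then show ?thesis
    using assms by (simp add: le_divide_eq)
qed

lemma accel_inexact_step:
  fixes x y u x' y' v xt :: "'a::real_inner" and A a lam gy gy' gs \<sigma> \<delta> V :: real
  assumes "0 < lam" "0 \<le> A" "0 < a" "0 < \<sigma>" "\<sigma> < 1" "0 \<le> \<delta>" "0 \<le> V"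
    and a_sq: "a\<^sup>2 = lam * (A + a)"
    and xt: "(A + a) *\<^sub>R xt = A *\<^sub>R y + a *\<^sub>R x"
    and grad_u: "gy' + v \<bullet> (u - y') \<le> gs"
    and grad_y: "gy' + v \<bullet> (y - y') \<le> gy"
    and opt: "gs \<le> gy'"
    and hpe: "norm (lam *\<^sub>R v + y' - xt) \<le> \<sigma> * norm (y' - xt) + lam * \<delta>"
    and x_update: "norm (x' - (x - a *\<^sub>R v)) \<le> a * \<delta>"
    and potential: "(norm (x - u))\<^sup>2 + 2 * A * (gy - gs) \<le> V\<^sup>2"
  shows "(norm (x' - u))\<^sup>2 + 2 * (A + a) * (gy' - gs) + (1 - \<sigma>) * ((A + a) / lam) * (norm (y' - xt))\<^sup>2
    \<le> (V + 2 * a * \<delta> / sqrt (1 - \<sigma>))\<^sup>2"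
proof -
  define r where "r = norm (y' - xt)"
  define e where "e = a * \<delta> / sqrt (1 - \<sigma>)"
  define Q where "Q = 2 * (A + a) * (gy' - gs) + (1 - \<sigma>) * ((A + a) / lam) * r\<^sup>2"
  have "a * \<delta> \<le> e" "0 \<le> e"
    using assms le_divide_sqrt_one_minus[of \<sigma> "a * \<delta>"] by (simp_all add: e_def)
  have "(norm (lam *\<^sub>R v + (y' - xt)))\<^sup>2 \<le> \<sigma> * r\<^sup>2 + (lam * \<delta>)\<^sup>2 / (1 - \<sigma>)"
    using hpe assms by (intro square_le_convex_split) (auto simp: r_def add_diff_eq)
  then have "(A + a) / lam * ((norm (lam *\<^sub>R v + (y' - xt)))\<^sup>2 - r\<^sup>2)
      \<le> (A + a) / lam * ((\<sigma> - 1) * r\<^sup>2 + (lam * \<delta>)\<^sup>2 / (1 - \<sigma>))"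
    using assms by (intro mult_left_mono) (auto simp: algebra_simps)
  also have "\<dots> = - ((1 - \<sigma>) * ((A + a) / lam) * r\<^sup>2) + e\<^sup>2"
    using assms by (simp add: e_def a_sq power_divide field_simps power2_eq_square)
  finally have "(norm (x - a *\<^sub>R v - u))\<^sup>2 + Q \<le> V\<^sup>2 + e\<^sup>2"
    using accel_exact_step[OF \<open>0 < lam\<close> \<open>0 \<le> A\<close> less_imp_le[OF \<open>0 < a\<close>] a_sq xt grad_u grad_y]
      potential unfolding Q_def r_def by linarith
  moreover have "norm (x' - u) \<le> norm (x - a *\<^sub>R v - u) + a * \<delta>"
    using norm_triangle_ineq[of "x' - (x - a *\<^sub>R v)" "x - a *\<^sub>R v - u"] x_update by simp
  moreover have "0 \<le> Q"
    using opt assms unfolding Q_def by simp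
  ultimately have "(norm (x' - u))\<^sup>2 + Q \<le> (V + e + a * \<delta>)\<^sup>2"
    using assms \<open>0 \<le> e\<close> by (intro square_add_le_square_add) auto
  also have "\<dots> \<le> (V + 2 * e)\<^sup>2"
    using assms \<open>a * \<delta> \<le> e\<close> \<open>0 \<le> e\<close> by (intro power_mono) auto
  finally show ?thesis
    unfolding Q_def r_def e_def by (simp add: algebra_simps)
qed

lemma accel_A_Suc: "accel_A lam (Suc k) = accel_A lam k + accel_a lam (Suc k)"
  by (simp add: accel_a_def)

declare accel_A.simps(2) [simp del]

lemma accel_a_pos:
  assumes "0 \<le> accel_A lam k" "0 < lam (Suc k)"
  shows "0 < accel_a lam (Suc k)"
  using assms by (simp add: accel_a_def add_pos_nonneg)

lemma accel_A_nonneg: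
  assumes "\<And>j. j \<in> {1..k} \<Longrightarrow> 0 < lam j"
  shows "0 \<le> accel_A lam k"
  using assms
proof (induction k)
  case (Suc k)
  then have "0 \<le> accel_A lam k" "0 < lam (Suc k)"
    by auto
  then have "0 < accel_a lam (Suc k)"
    by (rule accel_a_pos)
  with \<open>0 \<le> accel_A lam k\<close> show ?case
    by (simp only: accel_A_Suc)
qed simp

lemma accel_a_square:
  assumes "0 \<le> accel_A lam k" "0 \<le> lam (Suc k)"
  shows "(accel_a lam (Suc k))\<^sup>2 = lam (Suc k) * accel_A lam (Suc k)"
proof -
  define s where "s = sqrt ((lam (Suc k))\<^sup>2 + 4 * lam (Suc k) * accel_A lam k)"
  have s_sq: "s\<^sup>2 = (lam (Suc k))\<^sup>2 + 4 * lam (Suc k) * accel_A lam k"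
    unfolding s_def using assms by simp
  have a_eq: "accel_a lam (Suc k) = (lam (Suc k) + s) / 2"
    by (simp add: accel_a_def s_def)
  show ?thesis
    unfolding accel_A_Suc a_eq using s_sq by (simp add: field_simps power2_eq_square)
qed

lemma accel_A_mono:
  assumes "\<And>j. j \<in> {1..n} \<Longrightarrow> 0 < lam j" and "k \<le> n"
  shows "accel_A lam k \<le> accel_A lam n"
  using \<open>k \<le> n\<close>
proof (induction n rule: dec_induct)
  case (step m)
  then have "0 < accel_a lam (Suc m)"
    using assms by (intro accel_a_pos accel_A_nonneg) auto
  with step show ?case
    by (simp only: accel_A_Suc)
qed simp

lemma norm_convex_combination_le:
  fixes u v z :: "'a::real_normed_vector"
  assumes "norm (u - z) \<le> r" "norm (v - z) \<le> r" "0 \<le> \<theta>" "\<theta> \<le> 1"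
  shows "norm ((1 - \<theta>) *\<^sub>R u + \<theta> *\<^sub>R v - z) \<le> r"
proof -
  have "u \<in> cball z r" "v \<in> cball z r"
    using assms by (simp_all add: dist_norm norm_minus_commute)
  then have "(1 - \<theta>) *\<^sub>R u + \<theta> *\<^sub>R v \<in> cball z r"
    using assms by (intro convexD[OF convex_cball]) auto
  then show ?thesis
    by (simp add: dist_norm norm_minus_commute)
qed

locale accel_run =
  fixes g :: "'a::real_inner \<Rightarrow> real" and G :: "'a \<Rightarrow> 'a" and \<sigma> \<delta> :: real and K :: nat
    and lam :: "nat \<Rightarrow> real" and x y :: "nat \<Rightarrow> 'a" and xs :: 'a
  assumes convex: "convex_on UNIV g"
    and gradient: "\<And>z. (g has_derivative (\<lambda>h. G z \<bullet> h)) (at z)"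
    and framework: "accel_framework G \<sigma> \<delta> K lam x y"
    and minimizer: "\<And>z. g xs \<le> g z"
begin

lemma sigma_pos: "0 < \<sigma>" and sigma_less_one: "\<sigma> < 1" and delta_nonneg: "0 \<le> \<delta>"
  and one_le_K: "1 \<le> K" and x_0: "x 0 = 0" and y_0: "y 0 = 0"
  using framework by (auto simp: accel_framework_def)

lemma lam_pos: "j \<in> {1..K} \<Longrightarrow> 0 < lam j"
  using framework by (auto simp: accel_framework_def)

lemma hpe_condition: "k < K \<Longrightarrow>
    norm (lam (Suc k) *\<^sub>R G (y (Suc k)) + y (Suc k) - accel_xtilde lam x y k)
      \<le> \<sigma> * norm (y (Suc k) - accel_xtilde lam x y k) + lam (Suc k) * \<delta>"
  and x_condition: "k < K \<Longrightarrow>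
    norm (x (Suc k) - (x k - accel_a lam (Suc k) *\<^sub>R G (y (Suc k)))) \<le> accel_a lam (Suc k) * \<delta>"
  using framework by (auto simp: accel_framework_def)

lemma A_nonneg: "k \<le> K \<Longrightarrow> 0 \<le> accel_A lam k"
  using lam_pos by (intro accel_A_nonneg) auto

lemma A_le_A_K: "k \<le> K \<Longrightarrow> accel_A lam k \<le> accel_A lam K"
  using lam_pos by (intro accel_A_mono) auto

lemma step_coefficients:
  assumes "k < K"
  shows "0 < accel_a lam (Suc k)" "0 < accel_A lam (Suc k)"
    and "(accel_a lam (Suc k))\<^sup>2 = lam (Suc k) * accel_A lam (Suc k)"
proof -
  have "0 \<le> accel_A lam k" "0 < lam (Suc k)"
    using assms A_nonneg lam_pos by auto
  then show "0 < accel_a lam (Suc k)" "(accel_a lam (Suc k))\<^sup>2 = lam (Suc k) * accel_A lam (Suc k)"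
    by (simp_all add: accel_a_pos accel_a_square)
  then show "0 < accel_A lam (Suc k)"
    using \<open>0 \<le> accel_A lam k\<close> by (simp add: accel_A_Suc)
qed

lemma xtilde_combination:
  "k < K \<Longrightarrow> accel_A lam (Suc k) *\<^sub>R accel_xtilde lam x y k = accel_A lam k *\<^sub>R y k + accel_a lam (Suc k) *\<^sub>R x k"
  using step_coefficients(2)[of k] by (simp add: accel_xtilde_def scaleR_add_right)

lemma weighted_gap_nonneg: "k \<le> K \<Longrightarrow> 0 \<le> 2 * accel_A lam k * (g (y k) - g xs)"
  using A_nonneg minimizer by simp

definition potential_radius :: "nat \<Rightarrow> real"
  where "potential_radius k = norm xs + 2 * accel_A lam k * \<delta> / sqrt (1 - \<sigma>)"

lemma potential_radius_nonneg: "k \<le> K \<Longrightarrow> 0 \<le> potential_radius k"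
  using A_nonneg delta_nonneg sigma_less_one by (simp add: potential_radius_def)

lemma potential_radius_le: "k \<le> K \<Longrightarrow> potential_radius k \<le> potential_radius K"
  using A_le_A_K delta_nonneg sigma_less_one
  by (simp add: potential_radius_def divide_right_mono mult_right_mono)

lemma potential_radius_Suc:
  "potential_radius (Suc k) = potential_radius k + 2 * accel_a lam (Suc k) * \<delta> / sqrt (1 - \<sigma>)"
  by (simp add: potential_radius_def accel_A_Suc add_divide_distrib algebra_simps)

lemma potential_step:
  assumes k: "k < K"
    and potential: "(norm (x k - xs))\<^sup>2 + 2 * accel_A lam k * (g (y k) - g xs) \<le> (potential_radius k)\<^sup>2"
  shows "(norm (x (Suc k) - xs))\<^sup>2 + 2 * accel_A lam (Suc k) * (g (y (Suc k)) - g xs)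
      + (1 - \<sigma>) * (accel_A lam (Suc k) / lam (Suc k)) * (norm (y (Suc k) - accel_xtilde lam x y k))\<^sup>2
    \<le> (potential_radius (Suc k))\<^sup>2"
proof -
  have grad_ineq: "g p + G p \<bullet> (q - p) \<le> g q" for p q
    using convex gradient by (rule convex_on_UNIV_gradient_inequality)
  have a_sq: "(accel_a lam (Suc k))\<^sup>2 = lam (Suc k) * (accel_A lam k + accel_a lam (Suc k))"
    and xt: "(accel_A lam k + accel_a lam (Suc k)) *\<^sub>R accel_xtilde lam x y k
      = accel_A lam k *\<^sub>R y k + accel_a lam (Suc k) *\<^sub>R x k"
    using step_coefficients(3)[OF k] xtilde_combination[OF k] by (simp_all only: accel_A_Suc)
  show ?thesis
    unfolding potential_radius_Suc accel_A_Suc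
    using accel_inexact_step[OF _ A_nonneg step_coefficients(1)[OF k] sigma_pos sigma_less_one delta_nonneg
        potential_radius_nonneg a_sq xt grad_ineq grad_ineq minimizer hpe_condition[OF k] x_condition[OF k] potential]
      k lam_pos[of "Suc k"] by simp
qed

lemma potential_le:
  "k \<le> K \<Longrightarrow> (norm (x k - xs))\<^sup>2 + 2 * accel_A lam k * (g (y k) - g xs) \<le> (potential_radius k)\<^sup>2"
proof (induction k)
  case (Suc k)
  then have "0 \<le> (1 - \<sigma>) * (accel_A lam (Suc k) / lam (Suc k)) * (norm (y (Suc k) - accel_xtilde lam x y k))\<^sup>2"
    using sigma_less_one A_nonneg[of "Suc k"] lam_pos[of "Suc k"] by simp
  with potential_step[of k] Suc show ?case
    by simp
qed (simp add: potential_radius_def x_0)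

lemma dist_x_le:
  assumes "k \<le> K"
  shows "norm (x k - xs) \<le> potential_radius K"
proof -
  have "(norm (x k - xs))\<^sup>2 \<le> (potential_radius k)\<^sup>2"
    using potential_le[OF assms] weighted_gap_nonneg[OF assms] by linarith
  then have "norm (x k - xs) \<le> potential_radius k"
    using potential_radius_nonneg[OF assms] by (rule power2_le_imp_le)
  also have "\<dots> \<le> potential_radius K"
    using assms by (rule potential_radius_le)
  finally show ?thesis .
qed

lemma residual_le:
  assumes k: "k < K"
  shows "norm (y (Suc k) - accel_xtilde lam x y k)
    \<le> potential_radius K * accel_a lam (Suc k) / (accel_A lam (Suc k) * sqrt (1 - \<sigma>))"
proof -
  define r a A' s where "r = norm (y (Suc k) - accel_xtilde lam x y k)" and "a = accel_a lam (Suc k)"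
    and "A' = accel_A lam (Suc k)" and "s = sqrt (1 - \<sigma>)"
  have "0 < a" "0 < A'" "a\<^sup>2 = lam (Suc k) * A'" "0 < lam (Suc k)"
    using step_coefficients[OF k] lam_pos[of "Suc k"] k by (simp_all add: a_def A'_def)
  have "0 < s" "s\<^sup>2 = 1 - \<sigma>"
    using sigma_less_one by (simp_all add: s_def)
  have "(r * A' * s / a)\<^sup>2 = r\<^sup>2 * A'\<^sup>2 * s\<^sup>2 / (lam (Suc k) * A')"
    by (simp add: power_mult_distrib power_divide \<open>a\<^sup>2 = lam (Suc k) * A'\<close>)
  also have "\<dots> = (1 - \<sigma>) * (A' / lam (Suc k)) * r\<^sup>2"
    using \<open>0 < A'\<close> \<open>0 < lam (Suc k)\<close>
    by (simp only: \<open>s\<^sup>2 = 1 - \<sigma>\<close>) (simp add: power2_eq_square field_simps)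
  also have "\<dots> \<le> (potential_radius (Suc k))\<^sup>2"
    using potential_step[OF k potential_le[OF less_imp_le[OF k]]] weighted_gap_nonneg[OF Suc_leI[OF k]]
      zero_le_power2[of "norm (x (Suc k) - xs)"]
    unfolding r_def A'_def by linarith
  finally have "r * A' * s / a \<le> potential_radius (Suc k)"
    using potential_radius_nonneg[OF Suc_leI[OF k]] by (rule power2_le_imp_le)
  also have "\<dots> \<le> potential_radius K"
    using k by (intro potential_radius_le) simp
  finally show ?thesis
    using \<open>0 < a\<close> \<open>0 < A'\<close> \<open>0 < s\<close>
    unfolding r_def[symmetric] a_def[symmetric] A'_def[symmetric] s_def[symmetric]
    by (simp add: field_simps)
qed

lemma dist_y_le: "k \<le> K \<Longrightarrow> norm (y k - xs) \<le> 2 * potential_radius K / sqrt (1 - \<sigma>)"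
proof (induction k)
  case 0
  have "potential_radius K \<le> 2 * potential_radius K / sqrt (1 - \<sigma>)"
    using potential_radius_nonneg[of K] sigma_pos sigma_less_one
      le_divide_sqrt_one_minus[of \<sigma> "2 * potential_radius K"] by simp
  moreover have "norm xs \<le> potential_radius K"
    using potential_radius_le[of 0] by (simp add: potential_radius_def)
  ultimately show ?case
    using y_0 by simp
next
  case (Suc k)
  then have k: "k < K" by simp
  define R A a A' c where "R = potential_radius K" and "A = accel_A lam k" and "a = accel_a lam (Suc k)"
    and "A' = accel_A lam (Suc k)" and "c = 1 / sqrt (1 - \<sigma>)"
  have "0 \<le> A" "0 < a" "0 < A'" "A' = A + a" "0 \<le> R"
    using A_nonneg[of k] step_coefficients[OF k] k accel_A_Suc[of lam k] potential_radius_nonneg[of K]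
    by (auto simp: R_def A_def a_def A'_def)
  have "1 \<le> c"
    using sigma_pos sigma_less_one le_divide_sqrt_one_minus[of \<sigma> 1] by (simp add: c_def)
  let ?p = "(A / A') *\<^sub>R (y k - xs)" and ?q = "(a / A') *\<^sub>R (x k - xs)"
    and ?r = "y (Suc k) - accel_xtilde lam x y k"
  have decomposition: "y (Suc k) - xs = ?p + ?q + ?r"
    using \<open>0 < A'\<close> \<open>A' = A + a\<close>
    by (simp add: accel_xtilde_def A_def a_def A'_def scaleR_diff_right algebra_simps
        flip: scaleR_add_left add_divide_distrib)
  have "norm (y (Suc k) - xs) \<le> norm ?p + norm ?q + norm ?r"
    unfolding decomposition using norm_triangle_ineq[of "?p + ?q" ?r] norm_triangle_ineq[of ?p ?q]
    by linarith
  also have "\<dots> = (A / A') * norm (y k - xs) + (a / A') * norm (x k - xs) + norm ?r"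
    using \<open>0 \<le> A\<close> \<open>0 < a\<close> \<open>0 < A'\<close> by simp
  also have "\<dots> \<le> (A / A') * (2 * R * c) + (a / A') * (R * c) + R * c * a / A'"
  proof -
    have "norm (y k - xs) \<le> 2 * R * c"
      using Suc k by (simp add: R_def c_def)
    moreover have "norm (x k - xs) \<le> R * c"
      using dist_x_le[of k] k \<open>0 \<le> R\<close> \<open>1 \<le> c\<close> mult_left_mono[of 1 c R] by (simp add: R_def)
    moreover have "norm ?r \<le> R * c * a / A'"
      using residual_le[OF k] \<open>0 < A'\<close> sigma_less_one
      unfolding R_def[symmetric] A'_def[symmetric] a_def[symmetric] by (simp add: c_def field_simps)
    ultimately show ?thesis
      using \<open>0 \<le> A\<close> \<open>0 < a\<close> \<open>0 < A'\<close> by (intro add_mono mult_left_mono) auto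
  qed
  also have "\<dots> = (A + a) / A' * (2 * R * c)"
    by (simp add: add_divide_distrib algebra_simps)
  also have "\<dots> = 2 * R * c"
    using \<open>0 < A'\<close> \<open>A' = A + a\<close> by simp
  finally show ?case
    by (simp add: R_def c_def)
qed

lemma potential_radius_le_twice:
  assumes "\<delta> \<le> norm xs / ((4 * sqrt 2 / sqrt (1 - \<sigma>)) * accel_A lam K)"
  shows "potential_radius K \<le> 2 * norm xs"
proof -
  have "0 < accel_A lam K"
    using one_le_K step_coefficients(2)[of "K - 1"] by simp
  have "1 \<le> sqrt (2::real)"
    by simp
  then have "(2::real) \<le> 4 * sqrt 2"
    by linarith
  then have "2 * (accel_A lam K * \<delta> / sqrt (1 - \<sigma>)) \<le> (4 * sqrt 2) * (accel_A lam K * \<delta> / sqrt (1 - \<sigma>))"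
    using \<open>0 < accel_A lam K\<close> delta_nonneg sigma_less_one by (intro mult_right_mono) auto
  also have "\<dots> \<le> norm xs"
    using assms \<open>0 < accel_A lam K\<close> sigma_less_one by (simp add: pos_le_divide_eq field_simps)
  finally show ?thesis
    by (simp add: potential_radius_def)
qed

lemma dist_to_minimizer_le:
  assumes delta: "\<delta> \<le> norm xs / ((4 * sqrt 2 / sqrt (1 - \<sigma>)) * accel_A lam K)" and k: "k \<le> K"
  shows "norm (x k - xs) \<le> (4 * sqrt 2 / sqrt (1 - \<sigma>)) * norm xs"
    and "norm (y k - xs) \<le> (4 * sqrt 2 / sqrt (1 - \<sigma>)) * norm xs"
proof -
  define R where "R = potential_radius K"
  have "2 * R / sqrt (1 - \<sigma>) \<le> 4 * norm xs / sqrt (1 - \<sigma>)"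
    using potential_radius_le_twice[OF delta] sigma_less_one by (simp add: R_def divide_right_mono)
  also have "\<dots> \<le> (4 * sqrt 2 / sqrt (1 - \<sigma>)) * norm xs"
    using real_sqrt_ge_one[of 2] sigma_less_one
    by (simp add: divide_right_mono mult_right_mono)
  finally have bound: "2 * R / sqrt (1 - \<sigma>) \<le> (4 * sqrt 2 / sqrt (1 - \<sigma>)) * norm xs" .
  have "R \<le> 2 * R / sqrt (1 - \<sigma>)"
    using potential_radius_nonneg[of K] sigma_pos sigma_less_one le_divide_sqrt_one_minus[of \<sigma> "2 * R"]
    by (simp add: R_def)
  then show "norm (x k - xs) \<le> (4 * sqrt 2 / sqrt (1 - \<sigma>)) * norm xs"
    using dist_x_le[OF k] bound by (simp add: R_def)
  show "norm (y k - xs) \<le> (4 * sqrt 2 / sqrt (1 - \<sigma>)) * norm xs"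
    using dist_y_le[OF k] bound by (simp add: R_def)
qed

end

theorem mainTheorem14:
  fixes g :: "'a::euclidean_space \<Rightarrow> real" and G :: "'a \<Rightarrow> 'a"
    and \<sigma> \<delta> :: real and K :: nat and lam :: "nat \<Rightarrow> real"
    and x y :: "nat \<Rightarrow> 'a" and xs :: 'a
  assumes conv: "convex_on UNIV g"
    and grad: "\<And>z. (g has_derivative (\<lambda>h. G z \<bullet> h)) (at z)"
    and fw: "accel_framework G \<sigma> \<delta> K lam x y"
    and opt: "\<And>z. g xs \<le> g z"
    and delta: "\<delta> \<le> norm xs / ((4 * sqrt 2 / sqrt (1 - \<sigma>)) * accel_A lam K)"
  shows "\<forall>k\<in>{1..K}. \<forall>\<theta>\<in>{0..1::real}.
           norm (y k - xs) \<le> (4 * sqrt 2 / sqrt (1 - \<sigma>)) * norm xs \<and>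
           norm ((1 - \<theta>) *\<^sub>R x k + \<theta> *\<^sub>R y k - xs) \<le> (4 * sqrt 2 / sqrt (1 - \<sigma>)) * norm xs"
proof (intro ballI conjI)
  interpret accel_run g G \<sigma> \<delta> K lam x y xs
    using conv grad fw opt by unfold_locales
  fix k \<theta> assume "k \<in> {1..K}" and "\<theta> \<in> {0..1::real}"
  then show "norm (y k - xs) \<le> (4 * sqrt 2 / sqrt (1 - \<sigma>)) * norm xs"
    and "norm ((1 - \<theta>) *\<^sub>R x k + \<theta> *\<^sub>R y k - xs) \<le> (4 * sqrt 2 / sqrt (1 - \<sigma>)) * norm xs"
    using dist_to_minimizer_le[OF delta] by (auto intro: norm_convex_combination_le)
qed

end
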